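(* Let $X$ be a finite group with $|X|=n$ and let $S\subseteq X$ be a generating set with $|S|=d$ and $S^{-1}=S$. Let $G$ be the Cayley graph $(X,S)$, and suppose $G$ is not bipartite. Assume $\beta(G)<\tfrac{1}{16d}$. Then $$h(G)\leq \frac{100\,\beta(G)}{1-16d\,\beta(G)}.$$
   Context: The Cayley graph $(X,S)$ has vertex set $X$ and edges $g\sim gs$ for all $g\in X$, $s\in S$; it is $d$-regular. For $A,B\subseteq X$, $e(A,B)$ is the number of ordered pairs $(a,b)\in A\times B$ with $a\sim b$. For $A\subseteq X$, $\partial(A)$ is the set of edges with exactly one endpoint in $A$. The edge Cheeger constant is $h(G)=\min\{|\partial(A)|/(d|A|) : A\subseteq X,\ 0<|A|\le n/2\}$. For disjoint $L,R\subseteq X$ with $L\cup R\ne\emptyset$, $b(L,R)=\dfrac{e(L,L)+e(R,R)+|\partial(L\cup R)|}{d\,|L\cup R|}$, and the bipartiteness constant is $\beta(G)=\min_{L,R}b(L,R)$ over all such pairs. *)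

theory Defs
  imports Complex_Main "HOL-Algebra.Generated_Groups"
begin

definition cay_adj :: "('a, 'b) monoid_scheme \<Rightarrow> 'a set \<Rightarrow> 'a \<Rightarrow> 'a \<Rightarrow> bool" where
  "cay_adj G S g h \<longleftrightarrow> g \<in> carrier G \<and> (\<exists>s\<in>S. h = g \<otimes>\<^bsub>G\<^esub> s)"

definition e_count :: "('a, 'b) monoid_scheme \<Rightarrow> 'a set \<Rightarrow> 'a set \<Rightarrow> 'a set \<Rightarrow> nat" where
  "e_count G S A B = card {(a, b). a \<in> A \<and> b \<in> B \<and> cay_adj G S a b}"

definition cay_edges :: "('a, 'b) monoid_scheme \<Rightarrow> 'a set \<Rightarrow> 'a set set" where
  "cay_edges G S = {{a, b} | a b. cay_adj G S a b}"

definition edge_boundary :: "('a, 'b) monoid_scheme \<Rightarrow> 'a set \<Rightarrow> 'a set \<Rightarrow> 'a set set" where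
  "edge_boundary G S A = {e \<in> cay_edges G S. card (e \<inter> A) = 1}"

definition cheeger :: "('a, 'b) monoid_scheme \<Rightarrow> 'a set \<Rightarrow> real" where
  "cheeger G S = Min {real (card (edge_boundary G S A)) / (real (card S) * real (card A)) | A.
      A \<subseteq> carrier G \<and> 0 < card A \<and> real (card A) \<le> real (card (carrier G)) / 2}"

definition bval :: "('a, 'b) monoid_scheme \<Rightarrow> 'a set \<Rightarrow> 'a set \<Rightarrow> 'a set \<Rightarrow> real" where
  "bval G S L R = (real (e_count G S L L) + real (e_count G S R R)
      + real (card (edge_boundary G S (L \<union> R)))) / (real (card S) * real (card (L \<union> R)))"

definition bipartiteness :: "('a, 'b) monoid_scheme \<Rightarrow> 'a set \<Rightarrow> real" where
  "bipartiteness G S = Min {bval G S L R | L R.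
      L \<subseteq> carrier G \<and> R \<subseteq> carrier G \<and> L \<inter> R = {} \<and> L \<union> R \<noteq> {}}"

definition cay_bipartite :: "('a, 'b) monoid_scheme \<Rightarrow> 'a set \<Rightarrow> bool" where
  "cay_bipartite G S \<longleftrightarrow> (\<exists>L R. L \<union> R = carrier G \<and> L \<inter> R = {}
      \<and> (\<forall>a\<in>L. \<forall>b\<in>L. \<not> cay_adj G S a b) \<and> (\<forall>a\<in>R. \<forall>b\<in>R. \<not> cay_adj G S a b))"

end

theory Submission
  imports Defs
begin

text \<open>
  Let \<open>(L, R)\<close> attain \<open>\<beta> = \<beta>(G)\<close>, put \<open>U = L \<union> R\<close>, and suppose \<open>h(G) > 100 \<beta>\<close>.
  Expansion then forces \<open>U\<close> to contain all but a hundredth of the group. For each \<open>h\<close>, the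
  points \<open>x \<in> U\<close> with \<open>hx \<in> U\<close> on the same side as \<open>x\<close>, resp. on the opposite side, form two
  disjoint sets whose boundaries are \<open>O(\<beta> d |U|)\<close>; so the smaller one is tiny, and which one it
  is defines a character \<open>\<sigma> : X \<rightarrow> {\<plusminus>1}\<close>. As \<open>G\<close> is not bipartite, \<open>\<sigma>(s) = 1\<close> for some
  \<open>s \<in> S\<close>, and double counting shows that few \<open>x \<in> U\<close> have \<open>xs\<close> on the opposite side. Hence at
  least half of \<open>U\<close> lies on edges inside \<open>L\<close> or inside \<open>R\<close>, i.e. \<open>d \<beta> \<ge> 1/2\<close>, contradicting
  \<open>\<beta> < 1/(16d)\<close>.
\<close>

lemma card_subset_Un3_le:
  assumes "A \<subseteq> B \<union> C \<union> D" "finite B" "finite C" "finite D"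
  shows "card A \<le> card B + card C + card D"
proof -
  have "card A \<le> card (B \<union> C \<union> D)"
    using assms by (intro card_mono) auto
  also have "\<dots> \<le> card B + card C + card D"
    by (meson card_Un_le add_right_mono le_trans)
  finally show ?thesis .
qed

section \<open>Characters of order two\<close>

locale sign_character = group G for G :: "('a, 'b) monoid_scheme" (structure) +
  fixes \<sigma> :: "'a \<Rightarrow> int"
  assumes sign: "\<sigma> x = 1 \<or> \<sigma> x = -1"
    and mult: "x \<in> carrier G \<Longrightarrow> y \<in> carrier G \<Longrightarrow> \<sigma> (x \<otimes> y) = \<sigma> x * \<sigma> y"
begin

lemma square: "\<sigma> x * \<sigma> x = 1"
  using sign[of x] by auto

lemma one: "\<sigma> \<one> = 1"
  using mult[of \<one> \<one>] sign[of \<one>] by auto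

lemma inv: "x \<in> carrier G \<Longrightarrow> \<sigma> (inv x) = \<sigma> x"
  using mult[of x "inv x"] one sign[of x] sign[of "inv x"] by auto

lemma card_fiber:
  assumes fin: "finite (carrier G)" and x: "x \<in> carrier G"
  shows "card (carrier G) \<le> 2 * card {z \<in> carrier G. \<sigma> z = \<sigma> x}"
proof -
  let ?C = "{z \<in> carrier G. \<sigma> z = \<sigma> x}" and ?D = "{z \<in> carrier G. \<sigma> z \<noteq> \<sigma> x}"
  have "carrier G = ?C \<union> ?D" by auto
  moreover have "card (?C \<union> ?D) = card ?C + card ?D"
    by (rule card_Un_disjoint) (use fin in auto)
  ultimately have "card (carrier G) = card ?C + card ?D" by simp
  moreover have "card ?D \<le> card ?C"
  proof (cases "?D = {}")
    case False
    then obtain k where k: "k \<in> carrier G" "\<sigma> k \<noteq> \<sigma> x" by auto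
    define g where "g = k \<otimes> inv x"
    have g: "g \<in> carrier G" "\<sigma> g = -1"
      using k x sign[of k] sign[of x] by (auto simp: g_def mult inv)
    have "(\<lambda>z. g \<otimes> z) ` ?D \<subseteq> ?C"
    proof (rule image_subsetI)
      fix z assume z: "z \<in> ?D"
      then have "\<sigma> z = - \<sigma> x" using sign[of z] sign[of x] by auto
      then show "g \<otimes> z \<in> ?C" using z g by (simp add: mult)
    qed
    then show ?thesis
      using card_inj_on_le[OF inj_on_subset[OF inj_on_cmult[OF g(1)]]] fin by auto
  qed (metis card.empty le0)
  ultimately show ?thesis by simp
qed

end

lemma cheeger_mult_le_edge_boundary:
  assumes fin: "finite (carrier G)" and A: "A \<subseteq> carrier G" "A \<noteq> {}"
    and half: "2 * card A \<le> card (carrier G)"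
  shows "cheeger G S * (card S * card A) \<le> card (edge_boundary G S A)"
proof -
  let ?q = "\<lambda>A. real (card (edge_boundary G S A)) / (real (card S) * real (card A))"
  let ?Q = "{?q A | A. A \<subseteq> carrier G \<and> 0 < card A \<and> real (card A) \<le> real (card (carrier G)) / 2}"
  have "finite ?Q"
    by (rule finite_subset[of _ "?q ` Pow (carrier G)"]) (use fin in auto)
  moreover have "0 < card A" using A fin by (meson card_gt_0_iff finite_subset)
  then have "?q A \<in> ?Q" using A half by auto
  ultimately have "cheeger G S \<le> ?q A" unfolding cheeger_def by (rule Min_le)
  with \<open>0 < card A\<close> show ?thesis
    by (cases "card S = 0") (simp_all add: pos_le_divide_eq)
qed

lemma bipartiteness_attained:
  assumes "finite (carrier G)" "carrier G \<noteq> {}"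
  obtains L R where "L \<subseteq> carrier G" "R \<subseteq> carrier G" "L \<inter> R = {}" "L \<union> R \<noteq> {}"
    and "bipartiteness G S = bval G S L R"
proof -
  let ?B = "{bval G S L R | L R. L \<subseteq> carrier G \<and> R \<subseteq> carrier G \<and> L \<inter> R = {} \<and> L \<union> R \<noteq> {}}"
  have "finite ?B"
    by (rule finite_subset[of _ "(\<lambda>(L, R). bval G S L R) ` (Pow (carrier G) \<times> Pow (carrier G))"])
      (use assms(1) in auto)
  moreover have "bval G S (carrier G) {} \<in> ?B" using assms(2) by blast
  then have "?B \<noteq> {}" by blast
  ultimately have "bipartiteness G S \<in> ?B" unfolding bipartiteness_def by (rule Min_in)
  then show ?thesis using that by blast
qed

lemma bipartiteness_nonneg:
  assumes "finite (carrier G)" "carrier G \<noteq> {}"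
  shows "0 \<le> bipartiteness G S"
proof -
  obtain L R where "bipartiteness G S = bval G S L R"
    using bipartiteness_attained[OF assms] .
  then show ?thesis by (simp add: bval_def)
qed

lemma card_S_pos_if_not_bipartite:
  assumes "finite S" "\<not> cay_bipartite G S"
  shows "0 < card S"
proof (rule ccontr)
  assume "\<not> ?thesis"
  then have "S = {}" using assms(1) by simp
  then have "cay_bipartite G S"
    unfolding cay_bipartite_def by (intro exI[of _ "carrier G"] exI[of _ "{}"]) (auto simp: cay_adj_def)
  with assms(2) show False by contradiction
qed

lemma one_le_bipartiteness_if_one_in_S:
  assumes "group G" and fin: "finite (carrier G)" and S: "S \<subseteq> carrier G" "\<one>\<^bsub>G\<^esub> \<in> S"
  shows "1 \<le> card S * bipartiteness G S"
proof -
  interpret group G by fact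
  obtain L R where L: "L \<subseteq> carrier G" and R: "R \<subseteq> carrier G" and LR: "L \<inter> R = {}" "L \<union> R \<noteq> {}"
    and \<beta>: "bipartiteness G S = bval G S L R"
    using bipartiteness_attained[OF fin] one_closed by blast
  have loop_arcs: "card A \<le> e_count G S A A" if A: "A \<subseteq> carrier G" for A
  proof -
    have "(\<lambda>x. (x, x)) ` A \<subseteq> {(a, b). a \<in> A \<and> b \<in> A \<and> cay_adj G S a b}"
      using A S(2) by (force simp: cay_adj_def)
    moreover have "finite {(a, b). a \<in> A \<and> b \<in> A \<and> cay_adj G S a b}"
      by (rule finite_subset[of _ "A \<times> A"]) (use A fin finite_subset in auto)
    ultimately have "card ((\<lambda>x. (x, x)) ` A) \<le> e_count G S A A"
      unfolding e_count_def by (rule card_mono[rotated])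
    then show ?thesis by (simp add: card_image inj_on_def)
  qed
  have "finite (L \<union> R)" using L R fin finite_subset by blast
  then have m: "0 < card (L \<union> R)" "card (L \<union> R) = card L + card R"
    using LR by (auto simp: card_Un_disjoint card_gt_0_iff)
  have "finite S" using S(1) fin finite_subset by blast
  then have "0 < card S" using S(2) by (auto simp: card_gt_0_iff)
  have "real (card (L \<union> R)) \<le> real (e_count G S L L) + real (e_count G S R R)"
    using m(2) loop_arcs[OF L] loop_arcs[OF R] by simp
  then have "1 \<le> (real (e_count G S L L) + real (e_count G S R R)
      + real (card (edge_boundary G S (L \<union> R)))) / card (L \<union> R)"
    using m(1) by (simp add: le_divide_eq)
  also have "\<dots> = card S * bipartiteness G S"
    using \<open>0 < card S\<close> by (simp add: \<beta> bval_def)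
  finally show ?thesis .
qed

locale cayley = group G for G :: "('a, 'b) monoid_scheme" (structure) +
  fixes S :: "'a set"
  assumes finite_carrier: "finite (carrier G)"
    and S_subset: "S \<subseteq> carrier G"
    and inv_in_S: "s \<in> S \<Longrightarrow> inv s \<in> S"
    and one_notin_S: "\<one> \<notin> S"
begin

abbreviation adj :: "'a \<Rightarrow> 'a \<Rightarrow> bool" where "adj \<equiv> cay_adj G S"

lemma adj_carrier: "adj x y \<Longrightarrow> x \<in> carrier G \<and> y \<in> carrier G"
  using S_subset by (auto simp: cay_adj_def)

lemma adj_mult: "x \<in> carrier G \<Longrightarrow> s \<in> S \<Longrightarrow> adj x (x \<otimes> s)"
  by (auto simp: cay_adj_def)

lemma adj_sym: "adj x y \<Longrightarrow> adj y x"
proof -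
  assume "adj x y"
  then obtain s where x: "x \<in> carrier G" and s: "s \<in> S" and y: "y = x \<otimes> s"
    by (auto simp: cay_adj_def)
  have "s \<in> carrier G" using s S_subset by auto
  then have "x = y \<otimes> inv s" and "y \<in> carrier G" using x y by (simp_all add: m_assoc)
  with inv_in_S[OF s] show ?thesis by (auto simp: cay_adj_def)
qed

lemma adj_mult_left: "h \<in> carrier G \<Longrightarrow> adj x y \<Longrightarrow> adj (h \<otimes> x) (h \<otimes> y)"
  using S_subset by (auto simp: cay_adj_def m_assoc subset_iff)

lemma adj_irrefl: "\<not> adj x x"
  using one_notin_S S_subset by (auto simp: cay_adj_def subset_iff)

definition out_arcs :: "'a set \<Rightarrow> ('a \<times> 'a) set" where
  "out_arcs A = {(x, y). x \<in> A \<and> y \<notin> A \<and> adj x y}"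

lemma finite_out_arcs: "finite (out_arcs A)"
  by (rule finite_subset[of _ "carrier G \<times> carrier G"])
    (auto simp: out_arcs_def finite_carrier dest: adj_carrier)

lemma edge_boundary_eq_image: "edge_boundary G S A = (\<lambda>(x, y). {x, y}) ` out_arcs A"
proof (intro subset_antisym subsetI)
  fix e assume "e \<in> edge_boundary G S A"
  then obtain a b where e: "e = {a, b}" and ab: "adj a b" and one: "card (e \<inter> A) = 1"
    by (auto simp: edge_boundary_def cay_edges_def)
  have "a \<noteq> b" using ab adj_irrefl by blast
  then have "(a, b) \<in> out_arcs A \<or> (b, a) \<in> out_arcs A"
    using one e ab adj_sym by (cases "a \<in> A"; cases "b \<in> A") (auto simp: out_arcs_def)
  then show "e \<in> (\<lambda>(x, y). {x, y}) ` out_arcs A"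
    using e by (auto simp: image_iff insert_commute)
next
  fix e assume "e \<in> (\<lambda>(x, y). {x, y}) ` out_arcs A"
  then obtain x y where "e = {x, y}" "x \<in> A" "y \<notin> A" "adj x y"
    by (auto simp: out_arcs_def)
  moreover have "{x, y} \<inter> A = {x}" using calculation by auto
  ultimately show "e \<in> edge_boundary G S A"
    by (auto simp: edge_boundary_def cay_edges_def)
qed

lemma card_edge_boundary: "card (edge_boundary G S A) = card (out_arcs A)"
proof -
  have "inj_on (\<lambda>(x, y). {x, y}) (out_arcs A)"
    by (auto simp: inj_on_def out_arcs_def doubleton_eq_iff)
  then show ?thesis by (simp add: edge_boundary_eq_image card_image)
qed

lemma card_out_arcs_complement: "card (out_arcs (carrier G - A)) \<le> card (out_arcs A)"
proof -
  have "out_arcs (carrier G - A) \<subseteq> prod.swap ` out_arcs A"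
    by (auto simp: out_arcs_def image_iff dest: adj_sym adj_carrier)
  then have "card (out_arcs (carrier G - A)) \<le> card (prod.swap ` out_arcs A)"
    by (intro card_mono finite_imageI finite_out_arcs)
  then show ?thesis by (simp add: card_image)
qed

lemma cay_bipartite_if_sign_negative:
  assumes "sign_character G \<sigma>" and neg: "\<forall>s\<in>S. \<sigma> s = -1"
  shows "cay_bipartite G S"
proof -
  interpret sign_character G \<sigma> by fact
  have flip: "\<sigma> y = - \<sigma> x" if "adj x y" for x y
    using that neg S_subset by (auto simp: cay_adj_def mult subset_iff)
  let ?L = "{x \<in> carrier G. \<sigma> x = 1}" and ?R = "{x \<in> carrier G. \<sigma> x = -1}"
  have "?L \<union> ?R = carrier G" using sign by auto
  moreover have "\<forall>a\<in>?L. \<forall>b\<in>?L. \<not> adj a b" "\<forall>a\<in>?R. \<forall>b\<in>?R. \<not> adj a b"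
    by (auto dest: flip)
  moreover have "?L \<inter> ?R = {}" by auto
  ultimately show ?thesis unfolding cay_bipartite_def by (intro exI conjI)
qed

end

section \<open>Translates of a signed set\<close>

locale signed_pair = cayley +
  fixes L R :: "'a set"
  assumes L_subset: "L \<subseteq> carrier G" and R_subset: "R \<subseteq> carrier G"
    and disjoint: "L \<inter> R = {}"
begin

definition U :: "'a set" where "U = L \<union> R"

definition W :: "'a set" where "W = carrier G - U"

definition side :: "'a \<Rightarrow> int" where
  "side x = (if x \<in> L then 1 else if x \<in> R then -1 else 0)"

definition bad_arcs :: "('a \<times> 'a) set" where
  "bad_arcs = {(x, y). x \<in> U \<and> y \<in> U \<and> side x = side y \<and> adj x y}"

definition defect :: nat where "defect = card bad_arcs + card (out_arcs U)"

definition sign_shift :: "'a \<Rightarrow> int \<Rightarrow> 'a set" where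
  "sign_shift h e = {x \<in> U. h \<otimes> x \<in> U \<and> side (h \<otimes> x) = e * side x}"

definition flipped :: "'a \<Rightarrow> 'a set" where
  "flipped s = {x \<in> U. x \<otimes> s \<in> U \<and> side (x \<otimes> s) = - side x}"

lemma U_subset: "U \<subseteq> carrier G"
  using L_subset R_subset by (auto simp: U_def)

lemma finite_U: "finite U"
  using U_subset finite_carrier finite_subset by blast

lemma finite_W: "finite W"
  using finite_carrier by (simp add: W_def)

lemma card_U_W: "card U + card W = card (carrier G)"
  using U_subset finite_carrier by (simp add: W_def card_Diff_subset finite_U card_mono)

lemma side_U: "x \<in> U \<Longrightarrow> side x = 1 \<or> side x = -1"
  by (auto simp: side_def U_def)

lemma finite_bad_arcs: "finite bad_arcs"
  by (rule finite_subset[of _ "U \<times> U"]) (auto simp: bad_arcs_def finite_U)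

lemma card_bad_arcs: "card bad_arcs = e_count G S L L + e_count G S R R"
proof -
  let ?LL = "{(a, b). a \<in> L \<and> b \<in> L \<and> adj a b}"
  let ?RR = "{(a, b). a \<in> R \<and> b \<in> R \<and> adj a b}"
  have "bad_arcs = ?LL \<union> ?RR"
    using disjoint by (auto simp: bad_arcs_def U_def side_def)
  moreover have "finite ?LL" "finite ?RR"
    using finite_bad_arcs calculation by (auto intro: finite_subset)
  moreover have "?LL \<inter> ?RR = {}" using disjoint by auto
  ultimately show ?thesis by (simp add: card_Un_disjoint e_count_def)
qed

lemma bval_eq: "bval G S L R = real defect / (real (card S) * real (card U))"
  by (simp add: bval_def defect_def card_bad_arcs card_edge_boundary U_def)

lemma finite_sign_shift: "finite (sign_shift h e)"
  using finite_U by (simp add: sign_shift_def)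

lemma sign_shift_subset: "sign_shift h e \<subseteq> carrier G"
  using U_subset by (auto simp: sign_shift_def)

lemma sign_shift_disjoint: "sign_shift h 1 \<inter> sign_shift h (-1) = {}"
  using side_U by (fastforce simp: sign_shift_def)

lemma out_arc_sign_shift_cases:
  assumes h: "h \<in> carrier G" and e: "e = 1 \<or> e = -1"
    and xy: "(x, y) \<in> out_arcs (sign_shift h e)"
  shows "(x, y) \<in> bad_arcs \<union> out_arcs U \<or> (h \<otimes> x, h \<otimes> y) \<in> bad_arcs \<union> out_arcs U"
proof -
  have x: "x \<in> U" "h \<otimes> x \<in> U" "side (h \<otimes> x) = e * side x"
    and y: "y \<notin> sign_shift h e" and a: "adj x y"
    using xy by (auto simp: out_arcs_def sign_shift_def)
  have ha: "adj (h \<otimes> x) (h \<otimes> y)" using adj_mult_left[OF h a] .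
  consider "y \<notin> U" | "h \<otimes> y \<notin> U" | "y \<in> U" "h \<otimes> y \<in> U" "side (h \<otimes> y) \<noteq> e * side y"
    using y by (auto simp: sign_shift_def)
  then show ?thesis
  proof cases
    case 3
    then have "side x = side y \<or> side (h \<otimes> x) = side (h \<otimes> y)"
      using x e side_U[of x] side_U[of y] side_U[of "h \<otimes> x"] side_U[of "h \<otimes> y"] by auto
    then show ?thesis using x 3 a ha by (auto simp: bad_arcs_def)
  qed (use x a ha in \<open>auto simp: out_arcs_def\<close>)
qed

lemma card_out_arcs_sign_shift:
  assumes h: "h \<in> carrier G" and e: "e = 1 \<or> e = -1"
  shows "card (out_arcs (sign_shift h e)) \<le> 2 * defect"
proof -
  let ?A = "bad_arcs \<union> out_arcs U"
  let ?B = "map_prod (\<lambda>x. h \<otimes> x) (\<lambda>x. h \<otimes> x) -` ?A \<inter> carrier G \<times> carrier G"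
  have fin: "finite ?A" using finite_out_arcs finite_bad_arcs by simp
  have "out_arcs (sign_shift h e) \<subseteq> ?A \<union> ?B"
  proof
    fix p assume "p \<in> out_arcs (sign_shift h e)"
    then obtain x y where p: "p = (x, y)" and xy: "(x, y) \<in> out_arcs (sign_shift h e)"
      by (cases p) auto
    then have "x \<in> carrier G" "y \<in> carrier G"
      by (auto simp: out_arcs_def dest: adj_carrier)
    with out_arc_sign_shift_cases[OF h e xy] show "p \<in> ?A \<union> ?B" using p by auto
  qed
  then have "card (out_arcs (sign_shift h e)) \<le> card ?A + card ?B"
    using card_subset_Un3_le[of _ ?A ?B "{}"] fin finite_carrier by auto
  also have "card ?B \<le> card ?A"
    using card_vimage_inj_on_le[OF map_prod_inj_on[OF inj_on_cmult inj_on_cmult] fin] h by simp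
  also have "card ?A \<le> defect"
    unfolding defect_def by (rule card_Un_le)
  finally show ?thesis by simp
qed

lemma card_U_le_sign_shifts:
  assumes h: "h \<in> carrier G" and e: "e = 1 \<or> e = -1"
  shows "card U \<le> card (sign_shift h e) + card (sign_shift h (- e)) + card W"
proof -
  let ?O = "(\<lambda>x. h \<otimes> x) -` W \<inter> carrier G"
  have "U \<subseteq> sign_shift h e \<union> sign_shift h (- e) \<union> ?O"
  proof
    fix x assume x: "x \<in> U"
    then show "x \<in> sign_shift h e \<union> sign_shift h (- e) \<union> ?O"
      using h e U_subset side_U[of x] side_U[of "h \<otimes> x"]
      by (cases "h \<otimes> x \<in> U") (auto simp: sign_shift_def W_def)
  qed
  then have "card U \<le> card (sign_shift h e) + card (sign_shift h (- e)) + card ?O"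
    by (rule card_subset_Un3_le) (auto simp: finite_sign_shift finite_carrier)
  also have "card ?O \<le> card W"
    by (rule card_vimage_inj_on_le[OF inj_on_cmult[OF h] finite_W])
  finally show ?thesis by simp
qed

lemma card_sign_shift_mult_le:
  assumes h: "h \<in> carrier G" and k: "k \<in> carrier G" and e2: "e2 = 1 \<or> e2 = -1"
  shows "card (sign_shift (h \<otimes> k) (- (e1 * e2)))
    \<le> card W + card (sign_shift k (- e2)) + card (sign_shift h (- e1))"
proof -
  let ?O = "(\<lambda>x. k \<otimes> x) -` W \<inter> carrier G"
  let ?P = "(\<lambda>x. k \<otimes> x) -` sign_shift h (- e1) \<inter> carrier G"
  have "sign_shift (h \<otimes> k) (- (e1 * e2)) \<subseteq> ?O \<union> sign_shift k (- e2) \<union> ?P"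
  proof
    fix x assume x: "x \<in> sign_shift (h \<otimes> k) (- (e1 * e2))"
    then have xU: "x \<in> U" and xX: "x \<in> carrier G" using U_subset by (auto simp: sign_shift_def)
    then have "h \<otimes> (k \<otimes> x) \<in> U" "side (h \<otimes> (k \<otimes> x)) = - (e1 * e2) * side x"
      using x h k by (auto simp: sign_shift_def m_assoc)
    then show "x \<in> ?O \<union> sign_shift k (- e2) \<union> ?P"
      using xU xX k e2 side_U[of x] side_U[of "k \<otimes> x"]
      by (cases "k \<otimes> x \<in> U") (auto simp: W_def sign_shift_def)
  qed
  then have "card (sign_shift (h \<otimes> k) (- (e1 * e2)))
      \<le> card ?O + card (sign_shift k (- e2)) + card ?P"
    by (rule card_subset_Un3_le) (auto simp: finite_sign_shift finite_carrier)
  also have "card ?O \<le> card W"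
    by (rule card_vimage_inj_on_le[OF inj_on_cmult[OF k] finite_W])
  also have "card ?P \<le> card (sign_shift h (- e1))"
    by (rule card_vimage_inj_on_le[OF inj_on_cmult[OF k] finite_sign_shift])
  finally show ?thesis by simp
qed

lemma card_U_le_flipped:
  assumes s: "s \<in> S"
  shows "card U \<le> card (flipped s) + card bad_arcs + card W"
proof -
  have sX: "s \<in> carrier G" using s S_subset by auto
  let ?B = "(\<lambda>x. (x, x \<otimes> s)) -` bad_arcs \<inter> U"
  let ?O = "(\<lambda>x. x \<otimes> s) -` W \<inter> carrier G"
  have "U \<subseteq> flipped s \<union> ?B \<union> ?O"
  proof
    fix x assume x: "x \<in> U"
    then have "adj x (x \<otimes> s)" using adj_mult[OF _ s] U_subset by auto
    then show "x \<in> flipped s \<union> ?B \<union> ?O"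
      using x sX U_subset side_U[of x] side_U[of "x \<otimes> s"]
      by (cases "x \<otimes> s \<in> U") (auto simp: flipped_def bad_arcs_def W_def)
  qed
  then have "card U \<le> card (flipped s) + card ?B + card ?O"
    by (rule card_subset_Un3_le) (auto simp: flipped_def finite_U finite_carrier)
  also have "card ?B \<le> card bad_arcs"
    by (rule card_vimage_inj_on_le[OF _ finite_bad_arcs]) (auto simp: inj_on_def)
  also have "card ?O \<le> card W"
    by (rule card_vimage_inj_on_le[OF inj_on_multc[OF sX] finite_W])
  finally show ?thesis by simp
qed

end

section \<open>Signed sets beating the Cheeger constant\<close>

text \<open>
  Here \<open>c\<close> stands for the Cheeger constant; as \<open>b(L, R) = defect / (d |U|)\<close>, the
  assumption \<open>defect_small\<close> says \<open>c > 100 b(L, R)\<close>.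
\<close>

locale expanding_pair = signed_pair +
  fixes c :: real
  assumes expansion: "A \<subseteq> carrier G \<Longrightarrow> A \<noteq> {} \<Longrightarrow> 2 * card A \<le> card (carrier G)
      \<Longrightarrow> c * card S * card A \<le> card (out_arcs A)"
    and defect_small: "100 * real defect < c * card S * card U"
begin

lemma card_U_pos: "0 < card U"
  using defect_small by (cases "card U") auto

lemma expansion_rate_pos: "0 < c * card S"
proof -
  have "0 < c * card S * card U"
    using defect_small of_nat_0_le_iff[of defect] by linarith
  with card_U_pos show ?thesis by (simp add: zero_less_mult_iff)
qed

lemma card_carrier_lt: "card (carrier G) < 2 * card U"
proof (rule ccontr)
  assume "\<not> ?thesis"
  moreover have "U \<noteq> {}" using card_U_pos by auto
  ultimately have "c * card S * card U \<le> card (out_arcs U)"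
    using expansion[OF U_subset] by simp
  also have "\<dots> \<le> defect" by (simp add: defect_def)
  finally show False using defect_small by simp
qed

lemma card_W_small: "100 * card W \<le> card U"
proof (rule ccontr)
  assume W_large: "\<not> ?thesis"
  then have "W \<noteq> {}" by auto
  moreover have "2 * card W \<le> card (carrier G)" using card_U_W card_carrier_lt by linarith
  ultimately have "c * card S * card W \<le> card (out_arcs W)"
    using expansion by (auto simp: W_def)
  also have "\<dots> \<le> defect"
    using card_out_arcs_complement[of U] by (simp add: W_def defect_def)
  finally have "100 * (c * card S * card W) < c * card S * card U"
    using defect_small by linarith
  moreover have "c * card S * card U \<le> c * card S * (100 * card W)"
    using W_large expansion_rate_pos by (intro mult_left_mono) auto
  ultimately show False by simp
qed

lemma card_sign_shift_small:
  assumes h: "h \<in> carrier G" and e: "e = 1 \<or> e = -1"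
    and half: "2 * card (sign_shift h e) \<le> card (carrier G)"
  shows "50 * card (sign_shift h e) < card U"
proof (rule ccontr)
  assume shift_large: "\<not> ?thesis"
  then have "sign_shift h e \<noteq> {}" using card_U_pos by auto
  then have "c * card S * card (sign_shift h e) \<le> card (out_arcs (sign_shift h e))"
    using expansion[OF sign_shift_subset _ half] by simp
  also have "\<dots> \<le> 2 * defect" using card_out_arcs_sign_shift[OF h e] by linarith
  finally have "50 * (c * card S * card (sign_shift h e)) < c * card S * card U"
    using defect_small by linarith
  moreover have "c * card S * card U \<le> c * card S * (50 * card (sign_shift h e))"
    using shift_large expansion_rate_pos by (intro mult_left_mono) auto
  ultimately show False by simp
qed

lemma sign_shift_dichotomy:
  assumes h: "h \<in> carrier G"
  shows "50 * card (sign_shift h 1) < card U \<or> 50 * card (sign_shift h (-1)) < card U"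
proof -
  have "card (sign_shift h 1 \<union> sign_shift h (-1)) \<le> card (carrier G)"
    by (intro card_mono finite_carrier) (simp add: sign_shift_subset)
  then have "card (sign_shift h 1) + card (sign_shift h (-1)) \<le> card (carrier G)"
    by (simp add: card_Un_disjoint finite_sign_shift sign_shift_disjoint)
  then have "2 * card (sign_shift h 1) \<le> card (carrier G)
      \<or> 2 * card (sign_shift h (-1)) \<le> card (carrier G)" by linarith
  then show ?thesis using card_sign_shift_small[OF h] by blast
qed

definition \<sigma> :: "'a \<Rightarrow> int" where
  "\<sigma> h = (if 50 * card (sign_shift h (-1)) < card U then 1 else -1)"

lemma \<sigma>_sign: "\<sigma> h = 1 \<or> \<sigma> h = -1"
  by (simp add: \<sigma>_def)

lemma sign_shift_opposite_small:
  "h \<in> carrier G \<Longrightarrow> 50 * card (sign_shift h (- \<sigma> h)) < card U"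
  using sign_shift_dichotomy by (auto simp: \<sigma>_def)

lemma \<sigma>_mult:
  assumes h: "h \<in> carrier G" and k: "k \<in> carrier G"
  shows "\<sigma> (h \<otimes> k) = \<sigma> h * \<sigma> k"
proof (rule ccontr)
  let ?e = "\<sigma> h * \<sigma> k"
  assume "\<sigma> (h \<otimes> k) \<noteq> ?e"
  then have e: "?e = 1 \<or> ?e = -1" and opp: "?e = - \<sigma> (h \<otimes> k)"
    using \<sigma>_sign[of h] \<sigma>_sign[of k] \<sigma>_sign[of "h \<otimes> k"] by auto
  have "card U \<le> card (sign_shift (h \<otimes> k) ?e) + card (sign_shift (h \<otimes> k) (- ?e)) + card W"
    using card_U_le_sign_shifts[OF m_closed[OF h k] e] .
  also have "card (sign_shift (h \<otimes> k) (- ?e))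
      \<le> card W + card (sign_shift k (- \<sigma> k)) + card (sign_shift h (- \<sigma> h))"
    using card_sign_shift_mult_le[OF h k \<sigma>_sign] .
  finally show False
    using opp sign_shift_opposite_small[OF m_closed[OF h k]] sign_shift_opposite_small[OF h]
      sign_shift_opposite_small[OF k] card_W_small by simp
qed

sublocale \<sigma>: sign_character G \<sigma>
  by unfold_locales (use \<sigma>_sign \<sigma>_mult in auto)

definition shift_pairs :: "('a \<times> 'a) set" where
  "shift_pairs = (SIGMA h:{h \<in> carrier G. \<sigma> h = 1}. sign_shift h (-1))"

definition opposite_pairs :: "'a \<Rightarrow> ('a \<times> 'a) set" where
  "opposite_pairs t =
    {(x, z). x \<in> U \<and> x \<otimes> t \<in> U \<and> z \<in> U \<and> \<sigma> z = \<sigma> x \<and> side z = - side (x \<otimes> t)}"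

lemma finite_opposite_pairs: "finite (opposite_pairs t)"
  by (rule finite_subset[of _ "U \<times> U"]) (auto simp: opposite_pairs_def finite_U)

lemma finite_shift_pairs: "finite shift_pairs"
  using finite_carrier by (simp add: shift_pairs_def finite_sign_shift)

lemma card_shift_pairs: "50 * card shift_pairs \<le> card (carrier G) * card U"
proof -
  let ?H = "{h \<in> carrier G. \<sigma> h = 1}"
  have "50 * card shift_pairs = (\<Sum>h\<in>?H. 50 * card (sign_shift h (-1)))"
    using finite_carrier by (simp add: shift_pairs_def finite_sign_shift sum_distrib_left)
  also have "\<dots> \<le> (\<Sum>h\<in>?H. card U)"
    using sign_shift_opposite_small by (intro sum_mono) (metis (mono_tags) less_imp_le mem_Collect_eq)
  also have "\<dots> \<le> card (carrier G) * card U"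
    by (simp add: card_mono finite_carrier)
  finally show ?thesis .
qed

lemma card_opposite_pairs:
  assumes t: "t \<in> carrier G" "\<sigma> t = 1"
  shows "card (opposite_pairs t) \<le> card shift_pairs"
proof -
  let ?\<phi> = "\<lambda>(x, z). (z \<otimes> inv (x \<otimes> t), x \<otimes> t)"
  have "inj_on ?\<phi> (opposite_pairs t)"
  proof (rule inj_onI)
    fix p q assume "p \<in> opposite_pairs t" "q \<in> opposite_pairs t" and eq: "?\<phi> p = ?\<phi> q"
    moreover obtain x z x' z' where "p = (x, z)" "q = (x', z')" by (cases p, cases q)
    ultimately show "p = q"
      using t U_subset by (auto simp: opposite_pairs_def subset_iff)
  qed
  moreover have "?\<phi> ` opposite_pairs t \<subseteq> shift_pairs"
  proof (rule image_subsetI)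
    fix p assume "p \<in> opposite_pairs t"
    moreover obtain x z where p: "p = (x, z)" by (cases p)
    ultimately have x: "x \<in> carrier G" "x \<otimes> t \<in> U" and z: "z \<in> carrier G" "z \<in> U"
      and \<sigma>z: "\<sigma> z = \<sigma> x" and side_z: "side z = - side (x \<otimes> t)"
      using U_subset by (auto simp: opposite_pairs_def)
    have "\<sigma> (z \<otimes> inv (x \<otimes> t)) = 1"
      using x z t \<sigma>z by (simp add: \<sigma>.mult \<sigma>.inv \<sigma>.square)
    moreover have "z \<otimes> inv (x \<otimes> t) \<otimes> (x \<otimes> t) = z"
      using x z t by (simp add: m_assoc)
    ultimately show "?\<phi> p \<in> shift_pairs"
      using p x z t side_z by (simp add: shift_pairs_def sign_shift_def)
  qed
  ultimately show ?thesis by (rule card_inj_on_le[OF _ _ finite_shift_pairs])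
qed

lemma card_flipped_le:
  assumes s: "s \<in> S" "\<sigma> s = 1"
  shows "49 * card (flipped s) \<le> 4 * card U"
proof -
  \<comment> \<open>Double count the pairs \<open>(x, z)\<close> with \<open>x \<in> flipped s\<close> and \<open>\<sigma> z = \<sigma> x\<close>: every \<open>x\<close> has
    about \<open>n/2\<close> partners \<open>z\<close>, but according to the sides of \<open>z\<close> and \<open>x\<close> they are
    \<open>opposite_pairs \<one>\<close> or \<open>opposite_pairs s\<close>, both no larger than the small \<open>shift_pairs\<close>.\<close>
  have sX: "s \<in> carrier G" using s S_subset by auto
  let ?F = "flipped s" and ?n = "card (carrier G)"
  let ?D = "SIGMA x:?F. {z \<in> U. \<sigma> z = \<sigma> x}"
  have finite_F: "finite ?F" using finite_U by (simp add: flipped_def)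
  have "?D \<subseteq> opposite_pairs \<one> \<union> opposite_pairs s"
  proof
    fix p assume "p \<in> ?D"
    then obtain x z where "p = (x, z)" "x \<in> ?F" "z \<in> U" "\<sigma> z = \<sigma> x" by blast
    then show "p \<in> opposite_pairs \<one> \<union> opposite_pairs s"
      using U_subset side_U[of x] side_U[of z]
      by (auto simp: flipped_def opposite_pairs_def subset_iff)
  qed
  then have "card ?D \<le> card (opposite_pairs \<one> \<union> opposite_pairs s)"
    by (intro card_mono) (simp_all add: finite_opposite_pairs)
  also have "\<dots> \<le> card (opposite_pairs \<one>) + card (opposite_pairs s)"
    by (rule card_Un_le)
  also have "\<dots> \<le> 2 * card shift_pairs"
    using card_opposite_pairs[of \<one>] card_opposite_pairs[OF sX s(2)] \<sigma>.one by simp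
  finally have D_le: "card ?D \<le> 2 * card shift_pairs" .
  have fiber: "?n \<le> 2 * card {z \<in> U. \<sigma> z = \<sigma> x} + 2 * card W" if "x \<in> ?F" for x
  proof -
    have "{z \<in> carrier G. \<sigma> z = \<sigma> x} \<subseteq> {z \<in> U. \<sigma> z = \<sigma> x} \<union> W"
      by (auto simp: W_def)
    then have "card {z \<in> carrier G. \<sigma> z = \<sigma> x} \<le> card {z \<in> U. \<sigma> z = \<sigma> x} + card W"
      using card_subset_Un3_le[of _ _ W "{}"] finite_U finite_W by auto
    moreover have "x \<in> carrier G" using that U_subset by (auto simp: flipped_def)
    ultimately show ?thesis using \<sigma>.card_fiber[OF finite_carrier] by fastforce
  qed
  have "card ?F * ?n \<le> (\<Sum>x\<in>?F. 2 * card {z \<in> U. \<sigma> z = \<sigma> x} + 2 * card W)"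
    using sum_mono[OF fiber] by simp
  also have "\<dots> = 2 * card ?D + 2 * card ?F * card W"
    using finite_F finite_U by (simp add: sum.distrib sum_distrib_left)
  finally have D_ge: "card ?F * ?n \<le> 2 * card ?D + 2 * (card ?F * card W)"
    by (simp add: mult.assoc)
  have "100 * (card ?F * card W) \<le> card ?F * card U"
    using mult_left_mono[OF card_W_small] by simp
  moreover have "card ?F * card U \<le> card ?F * ?n"
    using card_U_W by simp
  ultimately have "49 * (card ?F * ?n) \<le> 4 * (?n * card U)"
    using D_ge D_le card_shift_pairs by linarith
  moreover have "0 < ?n" using card_U_W card_U_pos by linarith
  ultimately show ?thesis by (simp add: mult.commute mult.left_commute)
qed

lemma card_U_le_bad_arcs:
  assumes "\<not> cay_bipartite G S"
  shows "card U \<le> 2 * card bad_arcs"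
proof -
  obtain s where s: "s \<in> S" "\<sigma> s = 1"
    using cay_bipartite_if_sign_negative[OF \<sigma>.sign_character_axioms] assms \<sigma>_sign by blast
  show ?thesis
    using card_U_le_flipped[OF s(1)] card_flipped_le[OF s] card_W_small by linarith
qed

end

lemma (in cayley) cheeger_le_bipartiteness:
  assumes not_bipartite: "\<not> cay_bipartite G S"
    and small: "16 * real (card S) * bipartiteness G S < 1"
  shows "cheeger G S \<le> 100 * bipartiteness G S"
proof (rule ccontr)
  assume large: "\<not> ?thesis"
  obtain L R where "L \<subseteq> carrier G" "R \<subseteq> carrier G" "L \<inter> R = {}" and LR: "L \<union> R \<noteq> {}"
    and \<beta>: "bipartiteness G S = bval G S L R"
    using bipartiteness_attained[OF finite_carrier] one_closed by blast
  then interpret signed_pair G S L R by unfold_locales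
  have "finite S" using S_subset finite_carrier by (rule finite_subset)
  then have d_pos: "0 < card S" using not_bipartite by (rule card_S_pos_if_not_bipartite)
  have "0 < card U" using LR finite_U by (simp add: U_def card_gt_0_iff)
  then have defect: "real defect = bipartiteness G S * (card S * card U)"
    using \<beta> d_pos by (simp add: bval_eq)
  interpret expanding_pair G S L R "cheeger G S"
  proof
    show "cheeger G S * card S * card A \<le> card (out_arcs A)"
      if "A \<subseteq> carrier G" "A \<noteq> {}" "2 * card A \<le> card (carrier G)" for A
      using cheeger_mult_le_edge_boundary[where S = S, OF finite_carrier that]
      by (simp add: card_edge_boundary mult.assoc)
    show "100 * real defect < cheeger G S * card S * card U"
      using large d_pos \<open>0 < card U\<close> by (simp add: defect mult.assoc)
  qed
  have "real (card U) \<le> 2 * real defect"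
    using card_U_le_bad_arcs[OF not_bipartite] by (simp add: defect_def)
  moreover have "16 * real (card S) * bipartiteness G S * card U < 1 * real (card U)"
    by (rule mult_strict_right_mono[OF small]) (use \<open>0 < card U\<close> in simp)
  ultimately show False using \<open>0 < card U\<close> by (simp add: defect algebra_simps)
qed

theorem theorem4:
  fixes G :: "('a, 'b) monoid_scheme" and S :: "'a set"
  assumes "group G"
    and "finite (carrier G)"
    and "S \<subseteq> carrier G"
    and "generate G S = carrier G"
    and "\<forall>s\<in>S. inv\<^bsub>G\<^esub> s \<in> S"
    and "\<not> cay_bipartite G S"
    and "bipartiteness G S < 1 / (16 * real (card S))"
  shows "cheeger G S \<le> 100 * bipartiteness G S / (1 - 16 * real (card S) * bipartiteness G S)"
proof -
  interpret group G by fact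
  have "finite S" using assms(3,2) by (rule finite_subset)
  then have "0 < card S" using assms(6) by (rule card_S_pos_if_not_bipartite)
  then have small: "16 * real (card S) * bipartiteness G S < 1"
    using assms(7) by (simp add: field_simps)
  then have "\<one>\<^bsub>G\<^esub> \<notin> S"
    using one_le_bipartiteness_if_one_in_S[OF assms(1-3)] by fastforce
  then interpret cayley G S
    by unfold_locales (use assms(2,3,5) in auto)
  have "cheeger G S \<le> 100 * bipartiteness G S"
    using cheeger_le_bipartiteness[OF assms(6) small] .
  also have "\<dots> \<le> 100 * bipartiteness G S / (1 - 16 * real (card S) * bipartiteness G S)"
  proof -
    have "0 \<le> bipartiteness G S"
      using bipartiteness_nonneg[OF finite_carrier] one_closed by blast
    then show ?thesis using small by (simp add: le_divide_eq mult_left_le)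
  qed
  finally show ?thesis .
qed

end
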